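(* Consider the following random construction (the graph gamma process). Let $(\rho_i)_{i\ge 1}$ be the atom weights of a gamma process with mass parameter $\gamma_{0,\rho}>0$ and rate $c_\rho>0$ (i.e. the points of a Poisson process on $(0,\infty)$ with intensity $\gamma_{0,\rho}\rho^{-1}e^{-c_\rho\rho}\,d\rho$), and let $(\tau_i)_{i\ge1}$ be positive weights attached to the same countably many nodes $i$, distributed as the atom weights of a gamma process with mass parameter $\gamma_{0,\tau}>0$ and rate $c_\tau>0$. Given these, for a community index $\kappa$ with activation strength $r_\kappa>0$, draw independently for all nodes $i,j\ge 1$ $$\theta_{i\kappa}\sim\mathrm{Gamma}(\rho_i,1/e),\qquad \psi_{j\kappa}\sim\mathrm{Gamma}(\tau_j,1/f),$$ with constants $e,f>0$ (Gamma$(a,s)$ denotes shape $a$, scale $s$), and then independently $$z_{ij\kappa}\sim\mathrm{Bernoulli}\big(1-e^{-r_\kappa\theta_{i\kappa}\psi_{j\kappa}}\big),\quad i,j\ge1.$$ Then the number of edges of community $\kappa$, namely $\sum_{i=1}^\infty\sum_{j=1}^\infty z_{ij\kappa}$, is finite (almost surely).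
   Context: The binary array $(z_{ij\kappa})_{i,j}$ is interpreted as the adjacency matrix of a directed graph on countably infinitely many nodes, with $z_{ij\kappa}=1$ meaning community $\kappa$ places an edge from node $j$ to node $i$. *)

theory Defs
  imports "HOL-Probability.Probability"
begin

definition gamma_density :: "real \<Rightarrow> real \<Rightarrow> real \<Rightarrow> real" where
  "gamma_density a s x =
     (if 0 < x then x powr (a - 1) * exp (- x / s) / (Gamma a * s powr a) else 0)"

definition gamma_measure :: "real \<Rightarrow> real \<Rightarrow> real measure" where
  "gamma_measure a s = density lborel (\<lambda>x. ennreal (gamma_density a s x))"

definition gamma_levy_intensity :: "real \<Rightarrow> real \<Rightarrow> real set \<Rightarrow> ennreal" where
  "gamma_levy_intensity g0 c A =
     (\<integral>\<^sup>+ x \<in> A. ennreal (if 0 < x then g0 / x * exp (- c * x) else 0) \<partial>lborel)"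

definition poisson_prob :: "real \<Rightarrow> nat \<Rightarrow> real" where
  "poisson_prob m k = m ^ k / fact k * exp (- m)"

text \<open>P is the law of (an enumeration of) the atoms of a Poisson point process on (0,inf)
  with intensity measure nu: the atoms are distinct and positive, and for every finite
  family of pairwise disjoint Borel sets of finite intensity the atom counts are jointly
  distributed as independent Poisson variables with means nu(A_k).\<close>
definition poisson_process_law :: "(real set \<Rightarrow> ennreal) \<Rightarrow> (nat \<Rightarrow> real) measure \<Rightarrow> bool" where
  "poisson_process_law \<nu> P \<longleftrightarrow>
     prob_space P \<and>
     sets P = sets (PiM UNIV (\<lambda>_. borel)) \<and>
     (AE \<rho> in P. inj \<rho> \<and> (\<forall>i. 0 < \<rho> i)) \<and>
     (\<forall>(n::nat) (A :: nat \<Rightarrow> real set) (m :: nat \<Rightarrow> nat).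
        (\<forall>k<n. A k \<in> sets borel \<and> A k \<subseteq> {0<..} \<and> \<nu> (A k) < \<infinity>) \<longrightarrow>
        disjoint_family_on A {..<n} \<longrightarrow>
        measure P {\<rho> \<in> space P. \<forall>k<n. finite {i. \<rho> i \<in> A k} \<and> card {i. \<rho> i \<in> A k} = m k}
          = (\<Prod>k<n. poisson_prob (enn2real (\<nu> (A k))) (m k)))"

definition gamma_process_law :: "real \<Rightarrow> real \<Rightarrow> (nat \<Rightarrow> real) measure \<Rightarrow> bool" where
  "gamma_process_law g0 c P \<longleftrightarrow> poisson_process_law (gamma_levy_intensity g0 c) P"

end

theory Submission
  imports Defs
begin

(* Conditionally on the node weights, the edge (i, j) is present with probability
  1 - exp (- r \<theta>_i \<psi>_j) \<le> r \<theta>_i \<psi>_j, so the expected number of edges is at most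
  r (\<Sum>i \<theta>_i) (\<Sum>j \<psi>_j); it therefore suffices that both affiliation sequences are summable.
  Given summable shapes \<rho>, the variables \<theta>_i ~ Gamma(\<rho>_i, 1/e) have expected sum (\<Sum>i \<rho>_i)/e,
  so they are summable almost surely, and likewise for \<psi>.
  The atoms of a gamma process are summable almost surely: its Levy intensity gives mass at most
  \<gamma>0 to every dyadic shell (2^-(k+1), 2^-k], so the atoms in (0, 1] have expected total mass at
  most \<Sum>k 2^-k \<gamma>0 = 2 \<gamma>0, while (1, \<infinity>) has finite intensity and hence contains only
  finitely many atoms. *)

section \<open>Countable sums under product measures\<close>

lemma borel_measurable_nn_integral_count_space[measurable]:
  fixes f :: "'i::countable \<Rightarrow> 'a \<Rightarrow> ennreal"
  assumes [measurable]: "\<And>i. f i \<in> borel_measurable M"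
  shows "(\<lambda>x. \<integral>\<^sup>+i. f i x \<partial>count_space UNIV) \<in> borel_measurable M"
proof -
  interpret sigma_finite_measure "count_space (UNIV :: 'i set)"
    by (rule sigma_finite_measure_count_space)
  have "(\<lambda>(x, i). f i x) \<in> borel_measurable (M \<Otimes>\<^sub>M count_space UNIV)"
    using measurable_compose_countable[of "\<lambda>i p. f i (fst p)" "M \<Otimes>\<^sub>M count_space UNIV" borel snd]
    by (simp add: case_prod_beta')
  then show ?thesis by measurable
qed

lemma nn_integral_count_space_indicator_UNIV:
  "(\<integral>\<^sup>+i. indicator A i \<partial>count_space UNIV) = (if finite A then of_nat (card A) else \<infinity>)"
  by (simp add: nn_integral_indicator emeasure_count_space)

lemma nn_integral_count_space_prod:
  fixes f g :: "_ \<Rightarrow> ennreal"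
  shows "(\<integral>\<^sup>+p. f (fst p) * g (snd p) \<partial>count_space UNIV)
       = (\<integral>\<^sup>+i. f i \<partial>count_space UNIV) * (\<integral>\<^sup>+j. g j \<partial>count_space UNIV)"
  by (simp add: nn_integral_fst_count_space[symmetric] nn_integral_cmult nn_integral_multc)

lemma AE_pair_measure_fst:
  assumes "sigma_finite_measure M" and "AE x in N. P x"
  shows "AE p in N \<Otimes>\<^sub>M M. P (fst p)"
proof -
  interpret sigma_finite_measure M by fact
  from \<open>AE x in N. P x\<close> obtain S
    where "{x \<in> space N. \<not> P x} \<subseteq> S" "emeasure N S = 0" "S \<in> sets N"
    by (rule AE_E)
  then show ?thesis
    by (intro AE_I'[of "S \<times> space M"]) (auto simp: space_pair_measure)
qed

lemma AE_pair_measure_snd: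
  assumes "sigma_finite_measure M" and "AE y in M. P y"
  shows "AE p in N \<Otimes>\<^sub>M M. P (snd p)"
proof -
  interpret sigma_finite_measure M by fact
  from \<open>AE y in M. P y\<close> obtain S
    where "{y \<in> space M. \<not> P y} \<subseteq> S" "emeasure M S = 0" "S \<in> sets M"
    by (rule AE_E)
  then show ?thesis
    by (intro AE_I'[of "space N \<times> S"]) (auto simp: space_pair_measure)
qed

lemma AE_PiM_nn_integral_count_space_finite:
  fixes M :: "'i::countable \<Rightarrow> 'a measure" and f :: "'i \<Rightarrow> 'a \<Rightarrow> ennreal"
  assumes prob: "\<And>i. prob_space (M i)" and [measurable]: "\<And>i. f i \<in> borel_measurable (M i)"
    and fin: "(\<integral>\<^sup>+i. (\<integral>\<^sup>+x. f i x \<partial>M i) \<partial>count_space UNIV) < \<infinity>"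
  shows "AE \<omega> in PiM UNIV M. (\<integral>\<^sup>+i. f i (\<omega> i) \<partial>count_space UNIV) < \<infinity>"
proof -
  have comp: "(\<integral>\<^sup>+\<omega>. f i (\<omega> i) \<partial>PiM UNIV M) = (\<integral>\<^sup>+x. f i x \<partial>M i)" for i
    by (subst distr_PiM_component[of UNIV M i, symmetric, OF prob])
       (auto simp: nn_integral_distr)
  have "(\<integral>\<^sup>+\<omega>. (\<integral>\<^sup>+i. f i (\<omega> i) \<partial>count_space UNIV) \<partial>PiM UNIV M) < \<infinity>"
    using fin by (subst nn_integral_count_space_nn_integral) (auto simp: comp)
  then have "AE \<omega> in PiM UNIV M. (\<integral>\<^sup>+i. f i (\<omega> i) \<partial>count_space UNIV) \<noteq> \<infinity>"
    by (intro nn_integral_PInf_AE) auto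
  then show ?thesis
    by (simp add: top.not_eq_extremum)
qed

lemma AE_PiM_bernoulli_finite:
  fixes p :: "'i::countable \<Rightarrow> real"
  assumes "\<And>i. 0 \<le> p i" "\<And>i. p i \<le> 1" and "(\<integral>\<^sup>+i. ennreal (p i) \<partial>count_space UNIV) < \<infinity>"
  shows "AE z in PiM UNIV (\<lambda>i. measure_pmf (bernoulli_pmf (p i))). finite {i. z i}"
proof -
  have "AE z in PiM UNIV (\<lambda>i. measure_pmf (bernoulli_pmf (p i))).
      (\<integral>\<^sup>+i. indicator {True} (z i) \<partial>count_space UNIV) < \<infinity>"
    using assms
    by (intro AE_PiM_nn_integral_count_space_finite)
       (auto simp: prob_space_measure_pmf emeasure_pmf_single)
  moreover have "(\<integral>\<^sup>+i. indicator {True} (z i) \<partial>count_space UNIV)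
      = (\<integral>\<^sup>+i. indicator {i. z i} i \<partial>count_space UNIV)" for z :: "'i \<Rightarrow> bool"
    by (auto simp: indicator_def intro!: nn_integral_cong)
  ultimately show ?thesis
    by (simp add: nn_integral_count_space_indicator_UNIV split: if_splits)
qed

section \<open>The gamma distribution\<close>

lemma nn_integral_gamma_kernel:
  fixes b s :: real
  assumes b: "0 < b" and s: "0 < s"
  shows "(\<integral>\<^sup>+x. ennreal (if 0 < x then x powr (b - 1) * exp (- x / s) else 0) \<partial>lborel)
       = ennreal (Gamma b * s powr b)"
proof -
  define k where "k x = ennreal (if 0 < x then x powr (b - 1) * exp (- x / s) else 0)" for x :: real
  have [measurable]: "k \<in> borel_measurable borel"
    unfolding k_def by measurable
  have "(\<integral>\<^sup>+x. k x \<partial>lborel) = ennreal s * (\<integral>\<^sup>+t. k (0 + s * t) \<partial>lborel)"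
    using s by (subst nn_integral_real_affine[of k s 0]) (auto simp: k_def)
  also have "(\<integral>\<^sup>+t. k (0 + s * t) \<partial>lborel)
      = (\<integral>\<^sup>+t. ennreal (s powr (b - 1)) * ennreal (indicator {0..} t * t powr (b - 1) / exp t)
          \<partial>lborel)"
    using s by (intro nn_integral_cong)
      (auto simp: k_def powr_mult exp_minus field_simps ennreal_mult'[symmetric] indicator_def
            zero_less_mult_iff)
  also have "\<dots> = ennreal (s powr (b - 1)) * ennreal (Gamma b)"
    using b by (simp add: nn_integral_cmult Gamma_conv_nn_integral_real)
  finally show ?thesis
    using s b Gamma_real_pos[OF b]
    by (simp add: k_def ennreal_mult'[symmetric] powr_mult_base mult.commute mult.left_commute)
qed

lemma sets_gamma_measure[measurable_cong, simp]: "sets (gamma_measure a s) = sets borel"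
  by (simp add: gamma_measure_def)

lemma borel_measurable_gamma_density[measurable]: "gamma_density a s \<in> borel_measurable borel"
  unfolding gamma_density_def by measurable

lemma nn_integral_gamma_density:
  assumes "0 < a" "0 < s"
  shows "(\<integral>\<^sup>+x. ennreal (gamma_density a s x) \<partial>lborel) = 1"
proof -
  define C where "C = Gamma a * s powr a"
  have C: "0 < C" unfolding C_def using assms Gamma_real_pos by simp
  have "(\<integral>\<^sup>+x. ennreal (gamma_density a s x) \<partial>lborel)
      = (\<integral>\<^sup>+x. ennreal (1 / C) * ennreal (if 0 < x then x powr (a - 1) * exp (- x / s) else 0)
          \<partial>lborel)"
    using C by (intro nn_integral_cong) (simp add: gamma_density_def C_def ennreal_mult'[symmetric])
  also have "\<dots> = ennreal (1 / C) * ennreal C"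
    using assms by (subst nn_integral_cmult) (auto simp: nn_integral_gamma_kernel C_def)
  also have "\<dots> = 1"
    using C by (simp add: ennreal_mult'[symmetric])
  finally show ?thesis .
qed

lemma prob_space_gamma_measure: "0 < a \<Longrightarrow> 0 < s \<Longrightarrow> prob_space (gamma_measure a s)"
  unfolding gamma_measure_def
  by (rule prob_spaceI) (simp add: emeasure_density nn_integral_gamma_density)

lemma AE_gamma_measure_pos: "AE x in gamma_measure a s. 0 < x"
  unfolding gamma_measure_def by (subst AE_density) (auto simp: gamma_density_def)

lemma gamma_density_shape_shift:
  assumes "0 < a" "0 < s"
  shows "x * gamma_density a s x = a * s * gamma_density (a + 1) s x"
proof -
  have "Gamma (a + 1) = a * Gamma a"
    using assms by (intro Gamma_plus1) (auto simp: nonpos_Ints_def)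
  moreover have "x * x powr (a - 1) = x powr a" if "0 < x"
    using that by (simp add: powr_diff field_simps)
  ultimately show ?thesis
    using assms Gamma_real_pos[of a] by (auto simp: gamma_density_def powr_add field_simps)
qed

lemma nn_integral_gamma_measure_id:
  assumes "0 < a" "0 < s"
  shows "(\<integral>\<^sup>+x. ennreal x \<partial>gamma_measure a s) = ennreal (a * s)"
proof -
  have "(\<integral>\<^sup>+x. ennreal x \<partial>gamma_measure a s)
      = (\<integral>\<^sup>+x. ennreal (gamma_density a s x) * ennreal x \<partial>lborel)"
    unfolding gamma_measure_def by (subst nn_integral_density) auto
  also have "\<dots> = (\<integral>\<^sup>+x. ennreal (a * s) * ennreal (gamma_density (a + 1) s x) \<partial>lborel)"
  proof (intro nn_integral_cong)
    fix x :: real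
    show "ennreal (gamma_density a s x) * ennreal x
        = ennreal (a * s) * ennreal (gamma_density (a + 1) s x)"
    proof (cases "0 < x")
      case True
      then show ?thesis
        using assms gamma_density_shape_shift[OF assms, of x]
        by (simp add: ennreal_mult'[symmetric] mult.commute)
    qed (simp add: gamma_density_def)
  qed
  also have "\<dots> = ennreal (a * s)"
    using assms by (simp add: nn_integral_cmult nn_integral_gamma_density)
  finally show ?thesis .
qed

section \<open>Atom counts of a Poisson point process\<close>

lemma poisson_prob_nonneg: "0 \<le> l \<Longrightarrow> 0 \<le> poisson_prob l m"
  by (simp add: poisson_prob_def)

lemma poisson_prob_sums: "(\<lambda>m. poisson_prob l m) sums 1"
proof -
  have "(\<lambda>m. l ^ m / fact m * exp (- l)) sums (exp l * exp (- l))"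
    using exp_converges[of l] by (intro sums_mult2) (simp add: divide_inverse mult.commute)
  then show ?thesis
    by (simp add: poisson_prob_def exp_minus)
qed

lemma poisson_prob_mean_sums: "(\<lambda>m. real m * poisson_prob l m) sums l"
proof -
  have "real (Suc m) * poisson_prob l (Suc m) = l * poisson_prob l m" for m
    unfolding poisson_prob_def fact_Suc of_nat_mult by (simp add: divide_simps)
  then have "(\<lambda>m. real (Suc m) * poisson_prob l (Suc m)) sums (l * 1)"
    using sums_mult[OF poisson_prob_sums, of l] by simp
  then show ?thesis
    by (subst (asm) sums_Suc_iff) simp
qed

definition atom_count :: "real set \<Rightarrow> (nat \<Rightarrow> real) \<Rightarrow> ennreal" where
  "atom_count A \<rho> = (\<integral>\<^sup>+i. indicator A (\<rho> i) \<partial>count_space UNIV)"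

lemma atom_count_eq:
  "atom_count A \<rho> = (if finite {i. \<rho> i \<in> A} then of_nat (card {i. \<rho> i \<in> A}) else \<infinity>)"
proof -
  have "atom_count A \<rho> = (\<integral>\<^sup>+i. indicator {i. \<rho> i \<in> A} i \<partial>count_space UNIV)"
    unfolding atom_count_def by (auto simp: indicator_def intro!: nn_integral_cong)
  then show ?thesis
    by (simp add: nn_integral_count_space_indicator_UNIV)
qed

lemma borel_measurable_atom_count[measurable]:
  assumes "sets P = sets (PiM UNIV (\<lambda>_::nat. borel :: real measure))"
    and [measurable]: "A \<in> sets borel"
  shows "atom_count A \<in> borel_measurable P"
  unfolding atom_count_def measurable_cong_sets[OF assms(1) refl] by measurable

context
  fixes \<nu> :: "real set \<Rightarrow> ennreal" and P :: "(nat \<Rightarrow> real) measure" and A :: "real set"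
  assumes law: "poisson_process_law \<nu> P"
    and A: "A \<in> sets borel" "A \<subseteq> {0<..}" "\<nu> A < \<infinity>"
begin

lemma poisson_process_atom_count_prob:
  "emeasure P {\<rho> \<in> space P. atom_count A \<rho> = of_nat m} = ennreal (poisson_prob (enn2real (\<nu> A)) m)"
proof -
  interpret prob_space P
    using law by (simp add: poisson_process_law_def)
  have "{\<rho> \<in> space P. atom_count A \<rho> = of_nat m}
      = {\<rho> \<in> space P. \<forall>k<1::nat. finite {i. \<rho> i \<in> A} \<and> card {i. \<rho> i \<in> A} = m}"
    by (auto simp: atom_count_eq)
  moreover have "measure P {\<rho> \<in> space P. \<forall>k<1::nat. finite {i. \<rho> i \<in> A} \<and> card {i. \<rho> i \<in> A} = m}
      = poisson_prob (enn2real (\<nu> A)) m"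
    using law A unfolding poisson_process_law_def
    by (auto dest!: spec[of _ 1] spec[of _ "\<lambda>_. A"] spec[of _ "\<lambda>_. m"] simp: disjoint_family_on_def)
  ultimately show ?thesis
    by (simp add: emeasure_eq_measure)
qed

lemma poisson_process_AE_atom_count_finite: "AE \<rho> in P. atom_count A \<rho> \<noteq> \<infinity>"
proof -
  interpret prob_space P
    using law by (simp add: poisson_process_law_def)
  have sets_P: "sets P = sets (PiM UNIV (\<lambda>_. borel))"
    using law by (simp add: poisson_process_law_def)
  define S where "S m = {\<rho> \<in> space P. atom_count A \<rho> = of_nat m}" for m :: nat
  have [measurable]: "atom_count A \<in> borel_measurable P"
    using sets_P A(1) by (rule borel_measurable_atom_count)
  have [measurable]: "S m \<in> sets P" for m
    unfolding S_def by measurable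
  have "emeasure P (\<Union>m. S m) = (\<Sum>m. emeasure P (S m))"
    by (intro suminf_emeasure[symmetric]) (auto simp: disjoint_family_on_def S_def)
  also have "\<dots> = (\<Sum>m. ennreal (poisson_prob (enn2real (\<nu> A)) m))"
    by (simp add: S_def poisson_process_atom_count_prob)
  also have "\<dots> = 1"
    using poisson_prob_sums[of "enn2real (\<nu> A)"]
    by (subst suminf_ennreal2) (auto simp: poisson_prob_nonneg sums_iff)
  finally have "emeasure P (\<Union>m. S m) = 1" .
  moreover have "(\<Union>m. S m) = {\<rho> \<in> space P. atom_count A \<rho> \<noteq> \<infinity>}"
    by (auto simp: S_def atom_count_eq)
  ultimately show ?thesis
    by (intro AE_I_eq_1) auto
qed

lemma poisson_process_nn_integral_atom_count: "(\<integral>\<^sup>+\<rho>. atom_count A \<rho> \<partial>P) = \<nu> A"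
proof -
  have sets_P: "sets P = sets (PiM UNIV (\<lambda>_. borel))"
    using law by (simp add: poisson_process_law_def)
  define S where "S m = {\<rho> \<in> space P. atom_count A \<rho> = of_nat m}" for m :: nat
  have [measurable]: "atom_count A \<in> borel_measurable P"
    using sets_P A(1) by (rule borel_measurable_atom_count)
  have [measurable]: "S m \<in> sets P" for m
    unfolding S_def by measurable
  have "AE \<rho> in P. atom_count A \<rho> = (\<Sum>m. of_nat m * indicator (S m) \<rho>)"
    using poisson_process_AE_atom_count_finite AE_space
  proof eventually_elim
    case (elim \<rho>)
    then obtain k where k: "atom_count A \<rho> = of_nat k"
      by (auto simp: atom_count_eq split: if_splits)
    with elim have "(\<lambda>m. of_nat m * indicator (S m) \<rho> :: ennreal)
        = (\<lambda>m. if m = k then of_nat k else 0)"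
      by (auto simp: S_def indicator_def fun_eq_iff)
    then show ?case
      using sums_single[of k "\<lambda>_. of_nat k :: ennreal"] k by (simp add: sums_iff)
  qed
  then have "(\<integral>\<^sup>+\<rho>. atom_count A \<rho> \<partial>P) = (\<Sum>m. (\<integral>\<^sup>+\<rho>. of_nat m * indicator (S m) \<rho> \<partial>P))"
    by (simp add: nn_integral_cong_AE nn_integral_suminf)
  also have "\<dots> = (\<Sum>m. of_nat m * ennreal (poisson_prob (enn2real (\<nu> A)) m))"
    by (simp add: nn_integral_cmult_indicator S_def poisson_process_atom_count_prob)
  also have "\<dots> = (\<Sum>m. ennreal (real m * poisson_prob (enn2real (\<nu> A)) m))"
    by (simp add: ennreal_mult' ennreal_of_nat_eq_real_of_nat)
  also have "\<dots> = \<nu> A"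
    using poisson_prob_mean_sums poisson_prob_nonneg A
    by (subst suminf_ennreal2) (auto simp: sums_iff less_top)
  finally show ?thesis .
qed

end

section \<open>Summability of the atoms of a gamma process\<close>

definition finite_positive_weights :: "(nat \<Rightarrow> real) \<Rightarrow> bool" where
  "finite_positive_weights w \<longleftrightarrow> (\<forall>i. 0 < w i) \<and> (\<integral>\<^sup>+i. ennreal (w i) \<partial>count_space UNIV) < \<infinity>"

definition dyadic_shell :: "nat \<Rightarrow> real set" where
  "dyadic_shell k = {1 / 2 ^ Suc k <.. 1 / 2 ^ k}"

lemma dyadic_shell_borel[measurable]: "dyadic_shell k \<in> sets borel"
  by (simp add: dyadic_shell_def)

lemma dyadic_shell_pos: "dyadic_shell k \<subseteq> {0<..}"
  unfolding dyadic_shell_def by (auto intro: less_trans[rotated])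

lemma dyadic_shell_cover:
  fixes x :: real
  assumes "0 < x" "x \<le> 1"
  shows "\<exists>k. x \<in> dyadic_shell k"
proof -
  have ex: "\<exists>n. (1/2::real) ^ n < x"
    using real_arch_pow_inv[of x "1/2"] assms by auto
  define n where "n = (LEAST n. (1/2::real) ^ n < x)"
  have n: "(1/2::real) ^ n < x"
    unfolding n_def by (rule LeastI_ex[OF ex])
  then obtain k where k: "n = Suc k"
    using assms by (cases n) auto
  then have "\<not> (1/2::real) ^ k < x"
    using not_less_Least[of k "\<lambda>n. (1/2::real) ^ n < x"] by (simp add: n_def)
  with n k show ?thesis
    by (auto simp: dyadic_shell_def power_one_over)
qed

lemma nn_integral_le_dyadic_atom_counts:
  fixes \<rho> :: "nat \<Rightarrow> real"
  assumes pos: "\<And>i. 0 < \<rho> i"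
  shows "(\<integral>\<^sup>+i. ennreal (\<rho> i) \<partial>count_space UNIV)
       \<le> (\<integral>\<^sup>+k. ennreal ((1/2) ^ k) * atom_count (dyadic_shell k) \<rho> \<partial>count_space UNIV)
         + (\<integral>\<^sup>+i. ennreal (\<rho> i) * indicator {1<..} (\<rho> i) \<partial>count_space UNIV)"
    (is "_ \<le> _ + ?large")
proof -
  define D where "D k x = ennreal ((1/2) ^ k) * indicator (dyadic_shell k) x" for k x
  have pointwise: "ennreal (\<rho> i)
      \<le> (\<integral>\<^sup>+k. D k (\<rho> i) \<partial>count_space UNIV) + ennreal (\<rho> i) * indicator {1<..} (\<rho> i)" for i
  proof (cases "1 < \<rho> i")
    case False
    then obtain k where k: "\<rho> i \<in> dyadic_shell k"
      using dyadic_shell_cover[of "\<rho> i"] pos[of i] by auto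
    then have "ennreal (\<rho> i) \<le> D k (\<rho> i)"
      by (simp add: D_def dyadic_shell_def power_one_over ennreal_leI)
    also have "\<dots> \<le> (\<integral>\<^sup>+k. D k (\<rho> i) \<partial>count_space UNIV)"
      by (rule nn_integral_ge_point) simp
    finally show ?thesis
      by (simp add: add_increasing2)
  qed (simp add: add_increasing)
  have "(\<integral>\<^sup>+i. ennreal (\<rho> i) \<partial>count_space UNIV)
      \<le> (\<integral>\<^sup>+i. (\<integral>\<^sup>+k. D k (\<rho> i) \<partial>count_space UNIV)
               + ennreal (\<rho> i) * indicator {1<..} (\<rho> i) \<partial>count_space UNIV)"
    by (intro nn_integral_mono pointwise)
  also have "\<dots> = (\<integral>\<^sup>+i. (\<integral>\<^sup>+k. D k (\<rho> i) \<partial>count_space UNIV) \<partial>count_space UNIV) + ?large"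
    by (rule nn_integral_add) (auto simp: D_def)
  also have "(\<integral>\<^sup>+i. (\<integral>\<^sup>+k. D k (\<rho> i) \<partial>count_space UNIV) \<partial>count_space UNIV)
      = (\<integral>\<^sup>+k. (\<integral>\<^sup>+i. D k (\<rho> i) \<partial>count_space UNIV) \<partial>count_space UNIV)"
    by (rule nn_integral_count_space_nn_integral) auto
  also have "\<dots> = (\<integral>\<^sup>+k. ennreal ((1/2) ^ k) * atom_count (dyadic_shell k) \<rho> \<partial>count_space UNIV)"
    by (simp add: D_def atom_count_def nn_integral_cmult)
  finally show ?thesis .
qed

lemma poisson_process_AE_dyadic_atom_mass_finite:
  assumes law: "poisson_process_law \<nu> P" and shell: "\<And>k. \<nu> (dyadic_shell k) \<le> ennreal C"
  shows "AE \<rho> in P.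
    (\<integral>\<^sup>+k. ennreal ((1/2) ^ k) * atom_count (dyadic_shell k) \<rho> \<partial>count_space UNIV) \<noteq> \<infinity>"
proof -
  have sets_P: "sets P = sets (PiM UNIV (\<lambda>_. borel))"
    using law by (simp add: poisson_process_law_def)
  have [measurable]: "atom_count (dyadic_shell k) \<in> borel_measurable P" for k
    using sets_P by (rule borel_measurable_atom_count) simp
  have "\<nu> (dyadic_shell k) < \<infinity>" for k
    using shell[of k] by (rule le_less_trans) simp
  then have mean: "(\<integral>\<^sup>+\<rho>. atom_count (dyadic_shell k) \<rho> \<partial>P) = \<nu> (dyadic_shell k)" for k
    by (intro poisson_process_nn_integral_atom_count[OF law] dyadic_shell_borel dyadic_shell_pos)
  have "(\<integral>\<^sup>+\<rho>. (\<integral>\<^sup>+k. ennreal ((1/2) ^ k) * atom_count (dyadic_shell k) \<rho> \<partial>count_space UNIV) \<partial>P)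
      = (\<integral>\<^sup>+k. ennreal ((1/2) ^ k) * \<nu> (dyadic_shell k) \<partial>count_space UNIV)"
    by (subst nn_integral_count_space_nn_integral) (auto simp: nn_integral_cmult mean)
  also have "\<dots> \<le> (\<integral>\<^sup>+k. ennreal ((1/2) ^ k * max 0 C) \<partial>count_space UNIV)"
    \<comment> \<open>\<open>C\<close> may be negative, in which case \<open>ennreal C = 0\<close>\<close>
    using shell by (intro nn_integral_mono) (simp add: ennreal_mult' mult_left_mono)
  also have "\<dots> = ennreal (\<Sum>k. (1/2) ^ k * max 0 C)"
    unfolding nn_integral_count_space_nat
    by (rule suminf_ennreal2) (auto intro: summable_mult2 simp: summable_geometric)
  finally show ?thesis
    by (intro nn_integral_PInf_AE) (auto simp: top_unique)
qed

lemma poisson_process_AE_finite_positive_weights: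
  assumes law: "poisson_process_law \<nu> P"
    and shell: "\<And>k. \<nu> (dyadic_shell k) \<le> ennreal C"
    and large: "\<nu> {1<..} < \<infinity>"
  shows "AE \<rho> in P. finite_positive_weights \<rho>"
proof -
  have "AE \<rho> in P. inj \<rho> \<and> (\<forall>i. 0 < \<rho> i)"
    using law by (simp add: poisson_process_law_def)
  moreover have "AE \<rho> in P. atom_count {1<..} \<rho> \<noteq> \<infinity>"
    by (rule poisson_process_AE_atom_count_finite[OF law _ _ large]) auto
  moreover note poisson_process_AE_dyadic_atom_mass_finite[OF law shell]
  ultimately show ?thesis
  proof eventually_elim
    case (elim \<rho>)
    then have large_finite: "finite {i. \<rho> i \<in> {1<..}}"
      by (simp add: atom_count_eq split: if_splits)
    have "(\<integral>\<^sup>+i. ennreal (\<rho> i) * indicator {1<..} (\<rho> i) \<partial>count_space UNIV)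
        = (\<Sum>i\<in>{i. \<rho> i \<in> {1<..}}. ennreal (\<rho> i) * indicator {1<..} (\<rho> i))"
      using large_finite by (intro nn_integral_count_space') auto
    also have "\<dots> < \<infinity>"
      using large_finite by (simp add: ennreal_mult_less_top)
    finally show ?case
      using elim nn_integral_le_dyadic_atom_counts[of \<rho>]
      by (auto simp: finite_positive_weights_def top.not_eq_extremum intro: le_less_trans)
  qed
qed

lemma gamma_levy_intensity_dyadic_shell:
  fixes g0 c :: real
  assumes g0: "0 \<le> g0" and c: "0 \<le> c"
  shows "gamma_levy_intensity g0 c (dyadic_shell k) \<le> ennreal g0"
proof -
  have bound: "ennreal (if 0 < x then g0 / x * exp (- c * x) else 0) * indicator (dyadic_shell k) x
      \<le> ennreal (g0 * 2 ^ Suc k) * indicator (dyadic_shell k) x" for x :: real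
  proof (cases "x \<in> dyadic_shell k")
    case True
    then have x: "1 / 2 ^ Suc k < x"
      by (simp add: dyadic_shell_def)
    have "0 < x"
      using x by (rule less_trans[rotated]) simp
    have "g0 / x * exp (- c * x) \<le> g0 / x"
      using g0 c \<open>0 < x\<close> by (intro mult_left_le) auto
    also have "\<dots> = g0 * (1 / x)"
      by simp
    also have "\<dots> \<le> g0 * 2 ^ Suc k"
      using x \<open>0 < x\<close> g0 by (intro mult_left_mono) (simp_all add: field_simps del: power_Suc)
    finally show ?thesis
      using True \<open>0 < x\<close> by (simp add: ennreal_leI)
  qed simp
  have "gamma_levy_intensity g0 c (dyadic_shell k)
      \<le> (\<integral>\<^sup>+x. ennreal (g0 * 2 ^ Suc k) * indicator (dyadic_shell k) x \<partial>lborel)"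
    unfolding gamma_levy_intensity_def by (intro nn_integral_mono bound)
  also have "\<dots> = ennreal (g0 * 2 ^ Suc k) * ennreal (1 / 2 ^ k - 1 / 2 ^ Suc k)"
    by (simp add: nn_integral_cmult_indicator dyadic_shell_def field_simps del: power_Suc)
  also have "\<dots> = ennreal (g0 * 2 ^ Suc k * (1 / 2 ^ k - 1 / 2 ^ Suc k))"
    by (rule ennreal_mult[symmetric]) (use g0 in \<open>simp_all add: field_simps del: power_Suc\<close>)
  also have "g0 * 2 ^ Suc k * (1 / 2 ^ k - 1 / 2 ^ Suc k) = g0"
    by (simp add: field_simps)
  finally show ?thesis .
qed

lemma gamma_levy_intensity_greaterThan_finite:
  fixes g0 c :: real
  assumes g0: "0 \<le> g0" and c: "0 < c"
  shows "gamma_levy_intensity g0 c {1<..} < \<infinity>"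
proof -
  have "gamma_levy_intensity g0 c {1<..}
      \<le> (\<integral>\<^sup>+x. ennreal (g0 / c) * ennreal (exponential_density c x) \<partial>lborel)"
    unfolding gamma_levy_intensity_def
  proof (intro nn_integral_mono)
    fix x :: real
    show "ennreal (if 0 < x then g0 / x * exp (- c * x) else 0) * indicator {1<..} x
        \<le> ennreal (g0 / c) * ennreal (exponential_density c x)"
    proof (cases "1 < x")
      case True
      have "g0 / x \<le> g0"
        using True g0 by (simp add: divide_le_eq mult_le_cancel_left1)
      then have "g0 / x * exp (- c * x) \<le> g0 * exp (- c * x)"
        by (intro mult_right_mono) auto
      also have "\<dots> = (g0 / c) * exponential_density c x"
        using True c by (simp add: exponential_density_def)
      finally show ?thesis
        using True g0 c by (simp add: ennreal_mult'[symmetric] ennreal_leI)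
    qed simp
  qed
  also have "\<dots> = ennreal (g0 / c) * emeasure (density lborel (exponential_density c)) UNIV"
    by (simp add: nn_integral_cmult emeasure_density exponential_density_def)
  also have "\<dots> = ennreal (g0 / c)"
    using prob_space.emeasure_space_1[OF prob_space_exponential_density[OF c]] by simp
  finally show ?thesis
    by (simp add: top.not_eq_extremum le_less_trans)
qed

lemma gamma_process_AE_finite_positive_weights:
  assumes "0 < g0" "0 < c" "gamma_process_law g0 c P"
  shows "AE \<rho> in P. finite_positive_weights \<rho>"
proof (rule poisson_process_AE_finite_positive_weights)
  show "poisson_process_law (gamma_levy_intensity g0 c) P"
    using assms(3) unfolding gamma_process_law_def .
  show "gamma_levy_intensity g0 c (dyadic_shell k) \<le> ennreal g0" for k
    using assms by (intro gamma_levy_intensity_dyadic_shell) auto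
  show "gamma_levy_intensity g0 c {1<..} < \<infinity>"
    using assms by (intro gamma_levy_intensity_greaterThan_finite) auto
qed

section \<open>Finiteness of the edge set\<close>

lemma AE_PiM_gamma_finite_positive_weights:
  assumes \<rho>: "finite_positive_weights \<rho>" and s: "0 < s"
  shows "AE \<theta> in PiM UNIV (\<lambda>i. gamma_measure (\<rho> i) s). finite_positive_weights \<theta>"
proof -
  have prob: "prob_space (gamma_measure (\<rho> i) s)" for i
    using \<rho> s by (simp add: finite_positive_weights_def prob_space_gamma_measure)
  have "(\<integral>\<^sup>+i. (\<integral>\<^sup>+x. ennreal x \<partial>gamma_measure (\<rho> i) s) \<partial>count_space UNIV)
      = (\<integral>\<^sup>+i. ennreal s * ennreal (\<rho> i) \<partial>count_space UNIV)"
    using \<rho> s by (intro nn_integral_cong)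
      (simp add: finite_positive_weights_def nn_integral_gamma_measure_id ennreal_mult'
                 mult.commute)
  also have "\<dots> = ennreal s * (\<integral>\<^sup>+i. ennreal (\<rho> i) \<partial>count_space UNIV)"
    by (rule nn_integral_cmult) simp
  also have "\<dots> < \<infinity>"
    using \<rho> by (simp add: finite_positive_weights_def ennreal_mult_less_top)
  finally have "AE \<theta> in PiM UNIV (\<lambda>i. gamma_measure (\<rho> i) s).
      (\<integral>\<^sup>+i. ennreal (\<theta> i) \<partial>count_space UNIV) < \<infinity>"
    using prob by (intro AE_PiM_nn_integral_count_space_finite) auto
  moreover have "AE \<theta> in PiM UNIV (\<lambda>i. gamma_measure (\<rho> i) s). \<forall>i. 0 < \<theta> i"
    using prob by (simp add: AE_all_countable AE_PiM_component AE_gamma_measure_pos)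
  ultimately show ?thesis
    by (simp add: finite_positive_weights_def)
qed

lemma AE_PiM_edges_finite:
  assumes \<theta>: "finite_positive_weights \<theta>" and \<psi>: "finite_positive_weights \<psi>" and r: "0 < r"
  shows "AE z in PiM UNIV (\<lambda>(i, j). measure_pmf (bernoulli_pmf (1 - exp (- r * \<theta> i * \<psi> j)))).
           finite {(i, j). z (i, j)}"
proof -
  define p where "p = (\<lambda>(i, j). 1 - exp (- r * \<theta> i * \<psi> j))"
  have "0 \<le> r * \<theta> i * \<psi> j" for i j
    using \<theta> \<psi> r by (simp add: finite_positive_weights_def less_imp_le)
  then have p_bounds: "0 \<le> p e" "p e \<le> 1" "p e \<le> r * \<theta> (fst e) * \<psi> (snd e)" for e
    using exp_ge_add_one_self[of "- r * \<theta> (fst e) * \<psi> (snd e)"]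
    by (auto simp: p_def split: prod.split)
  have "ennreal (p e) \<le> ennreal (r * \<theta> (fst e)) * ennreal (\<psi> (snd e))" for e
  proof -
    have "ennreal (p e) \<le> ennreal (r * \<theta> (fst e) * \<psi> (snd e))"
      using p_bounds(3) by (rule ennreal_leI)
    also have "\<dots> = ennreal (r * \<theta> (fst e)) * ennreal (\<psi> (snd e))"
      using \<theta> \<psi> r by (intro ennreal_mult) (auto simp: finite_positive_weights_def less_imp_le)
    finally show ?thesis .
  qed
  then have "(\<integral>\<^sup>+e. ennreal (p e) \<partial>count_space UNIV)
      \<le> (\<integral>\<^sup>+e. ennreal (r * \<theta> (fst e)) * ennreal (\<psi> (snd e)) \<partial>count_space UNIV)"
    by (intro nn_integral_mono)
  also have "\<dots> = ennreal r * (\<integral>\<^sup>+i. ennreal (\<theta> i) \<partial>count_space UNIV)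
                               * (\<integral>\<^sup>+j. ennreal (\<psi> j) \<partial>count_space UNIV)"
    using r by (subst nn_integral_count_space_prod) (simp add: ennreal_mult' nn_integral_cmult)
  also have "\<dots> < \<infinity>"
    using \<theta> \<psi> by (simp add: finite_positive_weights_def ennreal_mult_less_top)
  finally have "AE z in PiM UNIV (\<lambda>e. measure_pmf (bernoulli_pmf (p e))). finite {e. z e}"
    using p_bounds by (intro AE_PiM_bernoulli_finite) auto
  moreover have "(\<lambda>e. measure_pmf (bernoulli_pmf (p e)))
      = (\<lambda>(i, j). measure_pmf (bernoulli_pmf (1 - exp (- r * \<theta> i * \<psi> j))))"
    by (auto simp: p_def)
  moreover have "{e. z e} = {(i, j). z (i, j)}" for z :: "nat \<times> nat \<Rightarrow> bool"
    by auto
  ultimately show ?thesis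
    by (simp only:)
qed

lemma AE_edges_finite_of_finite_positive_weights:
  assumes \<rho>: "finite_positive_weights \<rho>" and \<tau>: "finite_positive_weights \<tau>"
    and "0 < e" "0 < f" "0 < r"
  shows "AE \<theta> in PiM UNIV (\<lambda>i. gamma_measure (\<rho> i) (1 / e)).
           AE \<psi> in PiM UNIV (\<lambda>j. gamma_measure (\<tau> j) (1 / f)).
             AE z in PiM UNIV (\<lambda>(i, j). measure_pmf (bernoulli_pmf (1 - exp (- r * \<theta> i * \<psi> j)))).
               finite {(i, j). z (i, j)}"
proof -
  have "AE \<psi> in PiM UNIV (\<lambda>j. gamma_measure (\<tau> j) (1 / f)). finite_positive_weights \<psi>"
    using \<open>0 < f\<close> by (intro AE_PiM_gamma_finite_positive_weights[OF \<tau>]) simp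
  then have "finite_positive_weights \<theta> \<Longrightarrow>
      AE \<psi> in PiM UNIV (\<lambda>j. gamma_measure (\<tau> j) (1 / f)).
        AE z in PiM UNIV (\<lambda>(i, j). measure_pmf (bernoulli_pmf (1 - exp (- r * \<theta> i * \<psi> j)))).
          finite {(i, j). z (i, j)}" for \<theta>
    by (rule eventually_mono) (rule AE_PiM_edges_finite[OF _ _ \<open>0 < r\<close>])
  moreover have "AE \<theta> in PiM UNIV (\<lambda>i. gamma_measure (\<rho> i) (1 / e)). finite_positive_weights \<theta>"
    using \<open>0 < e\<close> by (intro AE_PiM_gamma_finite_positive_weights[OF \<rho>]) simp
  ultimately show ?thesis
    by (rule eventually_mono[rotated])
qed

theorem lemma1:
  fixes g\<rho> c\<rho> g\<tau> c\<tau> e f r :: real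
    and P\<rho> P\<tau> :: "(nat \<Rightarrow> real) measure"
  assumes "0 < g\<rho>" "0 < c\<rho>" "0 < g\<tau>" "0 < c\<tau>" "0 < e" "0 < f" "0 < r"
    and "gamma_process_law g\<rho> c\<rho> P\<rho>"
    and "gamma_process_law g\<tau> c\<tau> P\<tau>"
  shows "AE \<rho>\<tau> in P\<rho> \<Otimes>\<^sub>M P\<tau>.
           AE \<theta> in PiM UNIV (\<lambda>i. gamma_measure (fst \<rho>\<tau> i) (1 / e)).
             AE \<psi> in PiM UNIV (\<lambda>j. gamma_measure (snd \<rho>\<tau> j) (1 / f)).
               AE z in PiM UNIV (\<lambda>(i, j). measure_pmf (bernoulli_pmf (1 - exp (- r * \<theta> i * \<psi> j)))).
                 finite {(i :: nat, j :: nat). z (i, j)}"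
proof -
  have \<sigma>: "sigma_finite_measure P\<tau>"
    using assms(9) unfolding gamma_process_law_def poisson_process_law_def
    by (auto intro: prob_space_imp_sigma_finite)
  have "AE \<rho> in P\<rho>. finite_positive_weights \<rho>"
    using assms(1,2,8) by (rule gamma_process_AE_finite_positive_weights)
  with \<sigma> have "AE \<rho>\<tau> in P\<rho> \<Otimes>\<^sub>M P\<tau>. finite_positive_weights (fst \<rho>\<tau>)"
    by (rule AE_pair_measure_fst)
  moreover have "AE \<tau> in P\<tau>. finite_positive_weights \<tau>"
    using assms(3,4,9) by (rule gamma_process_AE_finite_positive_weights)
  with \<sigma> have "AE \<rho>\<tau> in P\<rho> \<Otimes>\<^sub>M P\<tau>. finite_positive_weights (snd \<rho>\<tau>)"
    by (rule AE_pair_measure_snd)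
  ultimately show ?thesis
  proof eventually_elim
    case (elim \<rho>\<tau>)
    then show ?case
      using assms(5-7) by (rule AE_edges_finite_of_finite_positive_weights)
  qed
qed

end
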